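(* Let $A$ be an alternative algebra over a field $F$ with unit element $1$, admitting a derivation with invertible values $d$. Then: (a) if $L\neq 0$ is a one-sided (left or right) ideal of $A$, then $d(L)\neq 0$; (b) every nonzero proper left (respectively right) ideal of $A$ is both a minimal and a maximal left (respectively right) ideal of $A$; (c) if $I$ is a proper two-sided ideal of $A$, then $I^2=0$; (d) if $\operatorname{char}F\neq 2$ (i.e. $2A\neq 0$), then $A$ is simple.
   Context: An algebra $A$ is alternative if $(x,x,y)=0$ and $(x,y,y)=0$ for all $x,y\in A$, where $(x,y,z)=(xy)z-x(yz)$. An element $a$ of a unital alternative algebra is invertible if there is $b$ with $ab=ba=1$; $U$ denotes the set of invertible elements. A derivation with invertible values of $A$ is a nonzero derivation $d$ of $A$ such that for every $x\in A$ either $d(x)\in U$ or $d(x)=0$. A proper ideal is one different from $A$. *)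

theory Defs
  imports Complex_Main
begin

definition assoc3 :: "('a \<Rightarrow> 'a \<Rightarrow> 'a::ab_group_add) \<Rightarrow> 'a \<Rightarrow> 'a \<Rightarrow> 'a \<Rightarrow> 'a" where
  "assoc3 mul x y z = mul (mul x y) z - mul x (mul y z)"

definition unital_alternative_algebra ::
  "('k::field \<Rightarrow> 'a::ab_group_add \<Rightarrow> 'a) \<Rightarrow> ('a \<Rightarrow> 'a \<Rightarrow> 'a) \<Rightarrow> 'a \<Rightarrow> bool" where
  "unital_alternative_algebra scale mul one \<longleftrightarrow>
     vector_space scale \<and>
     (\<forall>x y z. mul (x + y) z = mul x z + mul y z) \<and>
     (\<forall>x y z. mul x (y + z) = mul x y + mul x z) \<and>
     (\<forall>c x y. mul (scale c x) y = scale c (mul x y)) \<and>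
     (\<forall>c x y. mul x (scale c y) = scale c (mul x y)) \<and>
     (\<forall>x. mul one x = x \<and> mul x one = x) \<and>
     (\<forall>x y. assoc3 mul x x y = 0) \<and>
     (\<forall>x y. assoc3 mul x y y = 0)"

definition invertible_el :: "('a \<Rightarrow> 'a \<Rightarrow> 'a) \<Rightarrow> 'a \<Rightarrow> 'a \<Rightarrow> bool" where
  "invertible_el mul one a \<longleftrightarrow> (\<exists>b. mul a b = one \<and> mul b a = one)"

definition derivation ::
  "('k::field \<Rightarrow> 'a::ab_group_add \<Rightarrow> 'a) \<Rightarrow> ('a \<Rightarrow> 'a \<Rightarrow> 'a) \<Rightarrow> ('a \<Rightarrow> 'a) \<Rightarrow> bool" where
  "derivation scale mul d \<longleftrightarrow>
     (\<forall>x y. d (x + y) = d x + d y) \<and>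
     (\<forall>c x. d (scale c x) = scale c (d x)) \<and>
     (\<forall>x y. d (mul x y) = mul (d x) y + mul x (d y))"

definition derivation_inv_values ::
  "('k::field \<Rightarrow> 'a::ab_group_add \<Rightarrow> 'a) \<Rightarrow> ('a \<Rightarrow> 'a \<Rightarrow> 'a) \<Rightarrow> 'a \<Rightarrow> ('a \<Rightarrow> 'a) \<Rightarrow> bool" where
  "derivation_inv_values scale mul one d \<longleftrightarrow>
     derivation scale mul d \<and> (\<exists>x. d x \<noteq> 0) \<and>
     (\<forall>x. d x = 0 \<or> invertible_el mul one (d x))"

definition subspace_of :: "('k::field \<Rightarrow> 'a::ab_group_add \<Rightarrow> 'a) \<Rightarrow> 'a set \<Rightarrow> bool" where
  "subspace_of scale S \<longleftrightarrow> 0 \<in> S \<and> (\<forall>x\<in>S. \<forall>y\<in>S. x + y \<in> S) \<and> (\<forall>c. \<forall>x\<in>S. scale c x \<in> S)"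

definition left_ideal ::
  "('k::field \<Rightarrow> 'a::ab_group_add \<Rightarrow> 'a) \<Rightarrow> ('a \<Rightarrow> 'a \<Rightarrow> 'a) \<Rightarrow> 'a set \<Rightarrow> bool" where
  "left_ideal scale mul L \<longleftrightarrow> subspace_of scale L \<and> (\<forall>a. \<forall>x\<in>L. mul a x \<in> L)"

definition right_ideal ::
  "('k::field \<Rightarrow> 'a::ab_group_add \<Rightarrow> 'a) \<Rightarrow> ('a \<Rightarrow> 'a \<Rightarrow> 'a) \<Rightarrow> 'a set \<Rightarrow> bool" where
  "right_ideal scale mul L \<longleftrightarrow> subspace_of scale L \<and> (\<forall>a. \<forall>x\<in>L. mul x a \<in> L)"

definition two_sided_ideal ::
  "('k::field \<Rightarrow> 'a::ab_group_add \<Rightarrow> 'a) \<Rightarrow> ('a \<Rightarrow> 'a \<Rightarrow> 'a) \<Rightarrow> 'a set \<Rightarrow> bool" where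
  "two_sided_ideal scale mul I \<longleftrightarrow> left_ideal scale mul I \<and> right_ideal scale mul I"

definition minimal_among :: "('a::zero set \<Rightarrow> bool) \<Rightarrow> 'a set \<Rightarrow> bool" where
  "minimal_among P L \<longleftrightarrow> P L \<and> L \<noteq> {0} \<and> (\<forall>L'. P L' \<and> L' \<subseteq> L \<and> L' \<noteq> {0} \<longrightarrow> L' = L)"

definition maximal_among :: "('a set \<Rightarrow> bool) \<Rightarrow> 'a set \<Rightarrow> bool" where
  "maximal_among P L \<longleftrightarrow> P L \<and> L \<noteq> UNIV \<and> (\<forall>L'. P L' \<and> L \<subseteq> L' \<and> L' \<noteq> UNIV \<longrightarrow> L' = L)"

text \<open>I^2 = 0: all products of two elements of I vanish (I^2 is spanned by them).\<close>
definition square_zero :: "('a \<Rightarrow> 'a \<Rightarrow> 'a::zero) \<Rightarrow> 'a set \<Rightarrow> bool" where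
  "square_zero mul I \<longleftrightarrow> (\<forall>x\<in>I. \<forall>y\<in>I. mul x y = 0)"

definition simple_algebra ::
  "('k::field \<Rightarrow> 'a::ab_group_add \<Rightarrow> 'a) \<Rightarrow> ('a \<Rightarrow> 'a \<Rightarrow> 'a) \<Rightarrow> bool" where
  "simple_algebra scale mul \<longleftrightarrow> (\<exists>x y. mul x y \<noteq> 0) \<and>
     (\<forall>I. two_sided_ideal scale mul I \<longrightarrow> I = {0} \<or> I = UNIV)"

end

theory Submission
  imports Defs
begin

(* Everything except the final 2-torsion step only uses the ring structure, so the
   development is carried out for unital alternative rings; scalars enter only at the very end.

   1. Alternative rings (locale alternative_ring): the associator is alternating, satisfies the
      Moufang-type identities (x,xy,z) = (x,y,z)x and (x,yx,z) = x(x,y,z), and therefore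
      (a,b,z) = 0 whenever ab = ba = 1.  Consequently invertible elements cancel:
      b(az) = z and (za)b = z.
   2. Derivations with invertible values (locale inv_derivation) and additive left ideals:
      a proper left ideal contains no nonzero value of d, a nonzero left ideal contains an element
      with nonzero derivative, and such an element generates A modulo the ideal.  Hence nested
      left ideals 0 < L1 <= L2 < A coincide, proper two-sided ideals square to zero, and without
      2-torsion there are no proper nonzero two-sided ideals at all.
   3. Right ideals are left ideals of the opposite ring, which is again alternative and carries
      the same derivation; so all right-handed statements are obtained by transport. *)

section \<open>Alternative rings\<close>

locale alternative_ring =
  fixes mul :: "'a::ab_group_add \<Rightarrow> 'a \<Rightarrow> 'a" (infixl \<open>\<cdot>\<close> 70) and one :: 'a
  assumes distrib_l: "\<And>x y z. (x + y) \<cdot> z = x \<cdot> z + y \<cdot> z"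
    and distrib_r: "\<And>x y z. x \<cdot> (y + z) = x \<cdot> y + x \<cdot> z"
    and unit_l: "\<And>x. one \<cdot> x = x"
    and unit_r: "\<And>x. x \<cdot> one = x"
    and alt_l: "\<And>x y. assoc3 mul x x y = 0"
    and alt_r: "\<And>x y. assoc3 mul x y y = 0"
begin

abbreviation assoc :: "'a \<Rightarrow> 'a \<Rightarrow> 'a \<Rightarrow> 'a" where "assoc \<equiv> assoc3 mul"

lemma mul_zero_l [simp]: "0 \<cdot> x = 0"
  using distrib_l[of 0 0 x] by simp

lemma mul_zero_r [simp]: "x \<cdot> 0 = 0"
  using distrib_r[of x 0 0] by simp

lemma mul_neg_l: "(- x) \<cdot> y = - (x \<cdot> y)"
  using distrib_l[of "- x" x y] by (simp add: eq_neg_iff_add_eq_0)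

lemma mul_neg_r: "y \<cdot> (- x) = - (y \<cdot> x)"
  using distrib_r[of y "- x" x] by (simp add: eq_neg_iff_add_eq_0)

lemma mul_diff_l: "(x - y) \<cdot> z = x \<cdot> z - y \<cdot> z"
  using distrib_l[of x "- y" z] by (simp add: mul_neg_l)

lemma mul_diff_r: "z \<cdot> (x - y) = z \<cdot> x - z \<cdot> y"
  using distrib_r[of z x "- y"] by (simp add: mul_neg_r)

lemma teichmueller:
  "assoc (w \<cdot> x) y z - assoc w (x \<cdot> y) z + assoc w x (y \<cdot> z) = w \<cdot> assoc x y z + assoc w x y \<cdot> z"
  by (simp add: assoc3_def mul_diff_l mul_diff_r algebra_simps)

lemma assoc_add:
  "assoc (x + y) z w = assoc x z w + assoc y z w"
  "assoc z (x + y) w = assoc z x w + assoc z y w"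
  "assoc z w (x + y) = assoc z w x + assoc z w y"
  by (simp_all add: assoc3_def distrib_l distrib_r algebra_simps)

text \<open>Linearising the alternative laws: the associator is alternating.\<close>
lemma assoc_swap12: "assoc x y z = - assoc y x z"
proof -
  have "assoc (x + y) (x + y) z = 0" by (rule alt_l)
  then have "assoc x x z + assoc y x z + (assoc x y z + assoc y y z) = 0"
    unfolding assoc_add .
  then have "assoc x y z + assoc y x z = 0" by (simp add: alt_l add.commute)
  then show ?thesis by (simp add: eq_neg_iff_add_eq_0)
qed

lemma assoc_swap23: "assoc x y z = - assoc x z y"
proof -
  have "assoc x (y + z) (y + z) = 0" by (rule alt_r)
  then have "assoc x y y + assoc x z y + (assoc x y z + assoc x z z) = 0"
    unfolding assoc_add .
  then have "assoc x y z + assoc x z y = 0" by (simp add: alt_r add.commute)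
  then show ?thesis by (simp add: eq_neg_iff_add_eq_0)
qed

lemma assoc_cycle: "assoc x y z = assoc y z x"
  using assoc_swap12[of x y z] assoc_swap23[of y x z] by simp

text \<open>Moufang-type identities, obtained from three instances of the Teichmueller identity.\<close>
lemma moufang_assoc:
  "assoc x (x \<cdot> y) z = assoc x y z \<cdot> x"
  "assoc x (y \<cdot> x) z = x \<cdot> assoc x y z"
proof -
  define J where "J = assoc x y z"
  have xxyz: "assoc (x \<cdot> x) y z = assoc x (x \<cdot> y) z + x \<cdot> J"
    using teichmueller[of x x y z] by (simp add: alt_l J_def algebra_simps)
  have "assoc (x \<cdot> x) z y = assoc x (x \<cdot> z) y + x \<cdot> assoc x z y"
    using teichmueller[of x x z y] by (simp add: alt_l algebra_simps)
  moreover have "assoc (x \<cdot> x) z y = - assoc (x \<cdot> x) y z" "assoc x z y = - J"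
    unfolding J_def by (rule assoc_swap23)+
  ultimately have swap: "assoc x (x \<cdot> z) y = - assoc x (x \<cdot> y) z"
    using xxyz by (simp add: mul_neg_r algebra_simps eq_neg_iff_add_eq_0)
  have "assoc (y \<cdot> x) x z - assoc y (x \<cdot> x) z + assoc y x (x \<cdot> z) = 0"
    using teichmueller[of y x x z] by (simp add: alt_l alt_r)
  moreover have "assoc y (x \<cdot> x) z = - assoc (x \<cdot> x) y z" by (rule assoc_swap12)
  moreover have "assoc (y \<cdot> x) x z = - assoc x (y \<cdot> x) z"
    using assoc_cycle[of "y \<cdot> x" x z] assoc_swap23[of x z "y \<cdot> x"] by simp
  moreover have "assoc y x (x \<cdot> z) = assoc x (x \<cdot> z) y"
    using assoc_cycle[of y x "x \<cdot> z"] by simp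
  ultimately show right: "assoc x (y \<cdot> x) z = x \<cdot> assoc x y z"
    using swap xxyz J_def by (simp add: algebra_simps)
  have "assoc (z \<cdot> y) x x - assoc z (y \<cdot> x) x + assoc z y (x \<cdot> x)
      = z \<cdot> assoc y x x + assoc z y x \<cdot> x"
    by (rule teichmueller)
  moreover have "assoc z (y \<cdot> x) x = - assoc x (y \<cdot> x) z"
    using assoc_cycle[of x z "y \<cdot> x"] assoc_swap23[of x z "y \<cdot> x"] by simp
  moreover have "assoc z y (x \<cdot> x) = - assoc (x \<cdot> x) y z"
    using assoc_cycle[of "x \<cdot> x" z y] assoc_swap23[of "x \<cdot> x" z y] by simp
  moreover have "assoc z y x = - J"
    unfolding J_def using assoc_swap12[of z y x] assoc_cycle[of x y z] by simp
  ultimately have "assoc (x \<cdot> x) y z = x \<cdot> J + J \<cdot> x"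
    using right J_def by (simp add: alt_r mul_neg_l algebra_simps)
  then show "assoc x (x \<cdot> y) z = assoc x y z \<cdot> x"
    using xxyz J_def by simp
qed

lemma assoc_one_mid: "assoc a one z = 0"
  by (simp add: assoc3_def unit_l unit_r)

lemma inverse_pair_assoc:
  assumes ab: "a \<cdot> b = one" and ba: "b \<cdot> a = one"
  shows "assoc a b z = 0"
proof -
  define g where "g = assoc a b z"
  have ba_z: "assoc b a z = - g"
    using assoc_swap12[of b a z] g_def by simp
  have ag: "a \<cdot> g = 0"
    using moufang_assoc(2)[of a b z] ba assoc_one_mid g_def by simp
  have gb: "g \<cdot> b = 0"
    using moufang_assoc(1)[of b a z] ba assoc_one_mid ba_z by (simp add: mul_neg_l)
  have bg: "b \<cdot> g = 0"
    using moufang_assoc(2)[of b a z] ab assoc_one_mid ba_z by (simp add: mul_neg_r)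
  have abg: "assoc a b g = 0"
    using assoc_swap23[of a b g] by (simp add: assoc3_def ag gb)
  have "g = (a \<cdot> b) \<cdot> g" using ab unit_l by simp
  also have "\<dots> = assoc a b g + a \<cdot> (b \<cdot> g)" by (simp add: assoc3_def)
  also have "\<dots> = 0" using abg bg by simp
  finally show ?thesis using g_def by simp
qed

lemma invertible_cancel:
  assumes "invertible_el mul one a"
  obtains b where "a \<cdot> b = one" "b \<cdot> a = one"
    "\<And>z. b \<cdot> (a \<cdot> z) = z" "\<And>z. a \<cdot> (b \<cdot> z) = z"
    "\<And>z. (z \<cdot> a) \<cdot> b = z" "\<And>z. (z \<cdot> b) \<cdot> a = z"
proof -
  obtain b where ab: "a \<cdot> b = one" and ba: "b \<cdot> a = one"
    using assms unfolding invertible_el_def by blast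
  have "b \<cdot> (a \<cdot> z) = z" "(z \<cdot> a) \<cdot> b = z" for z
    using inverse_pair_assoc[OF ab ba] assoc_swap12[of a b z] assoc_cycle[of z a b] ab ba
    by (simp_all add: assoc3_def unit_l unit_r)
  moreover have "a \<cdot> (b \<cdot> z) = z" "(z \<cdot> b) \<cdot> a = z" for z
    using inverse_pair_assoc[OF ba ab] assoc_swap12[of b a z] assoc_cycle[of z b a] ab ba
    by (simp_all add: assoc3_def unit_l unit_r)
  ultimately show thesis using that ab ba by blast
qed

end

lemma alternative_ring_opposite:
  assumes "alternative_ring mul one"
  shows "alternative_ring (\<lambda>x y. mul y x) one"
proof -
  interpret alternative_ring mul one by (rule assms)
  show ?thesis
  proof
    show "assoc3 (\<lambda>x y. mul y x) x x y = 0" "assoc3 (\<lambda>x y. mul y x) x y y = 0" for x y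
      using alt_l[of y x] alt_r[of y x] assoc_swap23[of y x x] assoc_swap12[of y y x]
      by (simp_all add: assoc3_def)
  qed (simp_all add: distrib_l distrib_r unit_l unit_r)
qed

section \<open>Additive left ideals\<close>

text \<open>A left ideal of a ring: an additive subgroup closed under left multiplication (negatives
  come for free in a unital ring).  Right ideals are left ideals of the opposite ring.\<close>
definition ring_left_ideal :: "('a::ab_group_add \<Rightarrow> 'a \<Rightarrow> 'a) \<Rightarrow> 'a set \<Rightarrow> bool" where
  "ring_left_ideal mul L \<longleftrightarrow> 0 \<in> L \<and> (\<forall>x\<in>L. \<forall>y\<in>L. x + y \<in> L) \<and> (\<forall>a. \<forall>x\<in>L. mul a x \<in> L)"

lemma left_ideal_ring_left_ideal: "left_ideal scale mul L \<Longrightarrow> ring_left_ideal mul L"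
  unfolding left_ideal_def subspace_of_def ring_left_ideal_def by blast

lemma right_ideal_ring_left_ideal: "right_ideal scale mul L \<Longrightarrow> ring_left_ideal (\<lambda>x y. mul y x) L"
  unfolding right_ideal_def subspace_of_def ring_left_ideal_def by blast

lemma ring_left_idealD:
  assumes "ring_left_ideal mul L"
  shows ring_left_ideal_zero: "0 \<in> L"
    and ring_left_ideal_add: "x \<in> L \<Longrightarrow> y \<in> L \<Longrightarrow> x + y \<in> L"
    and ring_left_ideal_mul: "x \<in> L \<Longrightarrow> mul a x \<in> L"
  using assms unfolding ring_left_ideal_def by blast+

lemma (in alternative_ring) ring_left_ideal_neg:
  "ring_left_ideal mul L \<Longrightarrow> x \<in> L \<Longrightarrow> - x \<in> L"
  using ring_left_ideal_mul[of mul L x "- one"] by (simp add: mul_neg_l unit_l)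

lemma minimal_maximal_if_nested_eq:
  assumes nested_eq: "\<And>L1 L2. P L1 \<Longrightarrow> P L2 \<Longrightarrow> L1 \<subseteq> L2 \<Longrightarrow> L1 \<noteq> {0} \<Longrightarrow> L2 \<noteq> UNIV \<Longrightarrow> L1 = L2"
    and "P L" "L \<noteq> {0}" "L \<noteq> UNIV"
  shows "minimal_among P L \<and> maximal_among P L"
  using assms unfolding minimal_among_def maximal_among_def by blast

section \<open>Derivations with invertible values\<close>

locale inv_derivation = alternative_ring +
  fixes d :: "'a \<Rightarrow> 'a"
  assumes d_add: "\<And>x y. d (x + y) = d x + d y"
    and d_leibniz: "\<And>x y. d (x \<cdot> y) = d x \<cdot> y + x \<cdot> d y"
    and d_nontrivial: "\<exists>a. d a \<noteq> 0"
    and d_invertible: "\<And>x. d x \<noteq> 0 \<Longrightarrow> invertible_el mul one (d x)"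
begin

lemma d_zero [simp]: "d 0 = 0"
  using d_add[of 0 0] by simp

lemma one_nonzero: "one \<noteq> 0"
  using d_nontrivial unit_l by (metis d_zero mul_zero_l)

text \<open>An element killed by d whose left multiples are all killed by d is zero: multiply by an
  element a with d a invertible and cancel.\<close>
lemma d_kernel_faithful:
  assumes "d z = 0" and "\<And>a. d (a \<cdot> z) = 0"
  shows "z = 0"
proof -
  obtain a where a: "d a \<noteq> 0" using d_nontrivial by blast
  obtain b where cancel: "\<And>w. b \<cdot> (d a \<cdot> w) = w"
    using invertible_cancel[OF d_invertible[OF a]] by blast
  have "d a \<cdot> z = 0" using d_leibniz[of a z] assms by simp
  then show ?thesis using cancel[of z] by simp
qed

lemma left_ideal_d_nonzero:
  assumes L: "ring_left_ideal mul L" and nonzero: "L \<noteq> {0}"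
  shows "\<exists>y\<in>L. d y \<noteq> 0"
proof (rule ccontr)
  assume killed: "\<not> (\<exists>y\<in>L. d y \<noteq> 0)"
  obtain z where z: "z \<in> L" "z \<noteq> 0" using nonzero ring_left_ideal_zero[OF L] by blast
  have "d (a \<cdot> z) = 0" for a using killed ring_left_ideal_mul[OF L z(1)] by blast
  then have "z = 0" using d_kernel_faithful killed z(1) by blast
  then show False using z(2) by simp
qed

text \<open>A proper left ideal contains no nonzero (hence invertible) value of d.\<close>
lemma d_value_in_proper_left_ideal:
  assumes L: "ring_left_ideal mul L" and proper: "L \<noteq> UNIV" and dy: "d y \<in> L"
  shows "d y = 0"
proof (rule ccontr)
  assume "d y \<noteq> 0"
  then obtain v where cancel: "\<And>w. (w \<cdot> v) \<cdot> d y = w"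
    using invertible_cancel[OF d_invertible] by blast
  have "w \<in> L" for w
    using ring_left_ideal_mul[OF L dy, of "w \<cdot> v"] cancel[of w] by simp
  then show False using proper by blast
qed

text \<open>If x in L has d x invertible, every c has the form d l - w with l, w in L:
  write c = a \<cdot> d x and use d (a \<cdot> x) = d a \<cdot> x + a \<cdot> d x.\<close>
lemma left_ideal_d_span:
  assumes L: "ring_left_ideal mul L" and x: "x \<in> L" "d x \<noteq> 0"
  shows "\<exists>l\<in>L. \<exists>w\<in>L. c = d l - w"
proof -
  obtain v where cancel: "\<And>w. (w \<cdot> v) \<cdot> d x = w"
    using invertible_cancel[OF d_invertible[OF x(2)]] by blast
  define a where "a = c \<cdot> v"
  have "c = d (a \<cdot> x) - d a \<cdot> x"
    using d_leibniz[of a x] cancel[of c] unfolding a_def by simp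
  moreover have "a \<cdot> x \<in> L" "d a \<cdot> x \<in> L" using ring_left_ideal_mul[OF L x(1)] by auto
  ultimately show ?thesis by blast
qed

lemma left_ideal_nested_eq:
  assumes L1: "ring_left_ideal mul L1" and L2: "ring_left_ideal mul L2"
    and sub: "L1 \<subseteq> L2" and nonzero: "L1 \<noteq> {0}" and proper: "L2 \<noteq> UNIV"
  shows "L1 = L2"
proof -
  obtain x where x: "x \<in> L1" "d x \<noteq> 0" using left_ideal_d_nonzero[OF L1 nonzero] by blast
  have "y \<in> L1" if y: "y \<in> L2" for y
  proof -
    obtain l w where lw: "l \<in> L1" "w \<in> L1" "y = d l - w"
      using left_ideal_d_span[OF L1 x] by blast
    have "d l = y + w" using lw(3) by simp
    moreover have "y + w \<in> L2" using ring_left_ideal_add[OF L2 y] lw(2) sub by blast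
    ultimately have "d l \<in> L2" by simp
    then have "d l = 0" by (rule d_value_in_proper_left_ideal[OF L2 proper])
    then show "y \<in> L1" using lw ring_left_ideal_neg[OF L1] by simp
  qed
  then show ?thesis using sub by blast
qed

text \<open>Part (c): a proper two-sided ideal I has I^2 = 0.  For z = x \<cdot> y, both d z and
  d (a \<cdot> z) = d a \<cdot> z lie in I and hence vanish.\<close>
lemma two_sided_ideal_square_zero:
  assumes Il: "ring_left_ideal mul I" and Ir: "ring_left_ideal (\<lambda>x y. y \<cdot> x) I"
    and proper: "I \<noteq> UNIV" and x: "x \<in> I" and y: "y \<in> I"
  shows "x \<cdot> y = 0"
proof (rule d_kernel_faithful)
  note in_I = d_value_in_proper_left_ideal[OF Il proper]
  have xy: "x \<cdot> y \<in> I" using ring_left_ideal_mul[OF Il y] .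
  have "d x \<cdot> y + x \<cdot> d y \<in> I"
    using ring_left_ideal_add[OF Il ring_left_ideal_mul[OF Il y] ring_left_ideal_mul[OF Ir x]] .
  then have "d (x \<cdot> y) \<in> I" using d_leibniz[of x y] by simp
  then show dz: "d (x \<cdot> y) = 0" by (rule in_I)
  show "d (a \<cdot> (x \<cdot> y)) = 0" for a
  proof (rule in_I)
    show "d (a \<cdot> (x \<cdot> y)) \<in> I"
      using ring_left_ideal_mul[OF Il xy, of "d a"] d_leibniz[of a "x \<cdot> y"] dz by simp
  qed
qed

text \<open>Part (d): without 2-torsion there is no nonzero proper two-sided ideal.  Take x in I with
  d x invertible with inverse v; then x \<cdot> (v \<cdot> x) \<in> I^2 = 0, and applying d gives x + x = 0.\<close>
lemma two_sided_ideal_trivial: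
  assumes no_2_torsion: "\<And>x::'a. x + x = 0 \<Longrightarrow> x = 0"
    and Il: "ring_left_ideal mul I" and Ir: "ring_left_ideal (\<lambda>x y. y \<cdot> x) I"
  shows "I = {0} \<or> I = UNIV"
proof (rule ccontr)
  assume "\<not> (I = {0} \<or> I = UNIV)"
  then have nonzero: "I \<noteq> {0}" and proper: "I \<noteq> UNIV" by auto
  note sq = two_sided_ideal_square_zero[OF Il Ir proper]
  obtain x where x: "x \<in> I" "d x \<noteq> 0" using left_ideal_d_nonzero[OF Il nonzero] by blast
  obtain v where vx: "v \<cdot> d x = one" and cancel: "\<And>w. d x \<cdot> (v \<cdot> w) = w"
    using invertible_cancel[OF d_invertible[OF x(2)]] by blast
  have in_I: "a \<cdot> x \<in> I" for a using ring_left_ideal_mul[OF Il x(1)] .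
  have "0 = d (x \<cdot> (v \<cdot> x))" using sq[OF x(1) in_I] by simp
  also have "\<dots> = d x \<cdot> (v \<cdot> x) + x \<cdot> (d v \<cdot> x + v \<cdot> d x)"
    using d_leibniz[of x "v \<cdot> x"] d_leibniz[of v x] by simp
  also have "\<dots> = x + x"
    using cancel[of x] vx sq[OF x(1) in_I] by (simp add: distrib_r unit_r)
  finally have "x = 0" using no_2_torsion[of x] by simp
  then show False using x(2) by simp
qed

end

lemma inv_derivation_opposite:
  assumes "inv_derivation mul one d"
  shows "inv_derivation (\<lambda>x y. mul y x) one d"
proof -
  interpret inv_derivation mul one d by (rule assms)
  show ?thesis
  proof (intro_locales)
    show "alternative_ring (\<lambda>x y. mul y x) one"
      by (rule alternative_ring_opposite) unfold_locales
    show "inv_derivation_axioms (\<lambda>x y. mul y x) one d"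
      unfolding inv_derivation_axioms_def
      using d_add d_leibniz d_nontrivial d_invertible
      by (auto simp: invertible_el_def add.commute conj_commute)
  qed
qed

lemma inv_derivation_of_algebra:
  assumes "unital_alternative_algebra scale mul one" and "derivation_inv_values scale mul one d"
  shows "inv_derivation mul one d"
  using assms unfolding unital_alternative_algebra_def derivation_inv_values_def derivation_def
  by unfold_locales auto

theorem lemma1p3:
  fixes scale :: "'k::field \<Rightarrow> 'a::ab_group_add \<Rightarrow> 'a"
    and mul :: "'a \<Rightarrow> 'a \<Rightarrow> 'a" and one :: 'a and d :: "'a \<Rightarrow> 'a"
  assumes A: "unital_alternative_algebra scale mul one"
    and D: "derivation_inv_values scale mul one d"
  shows "(\<forall>L. (left_ideal scale mul L \<or> right_ideal scale mul L) \<and> L \<noteq> {0} \<longrightarrow> d ` L \<noteq> {0})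
    \<and> (\<forall>L. left_ideal scale mul L \<and> L \<noteq> {0} \<and> L \<noteq> UNIV \<longrightarrow>
           minimal_among (left_ideal scale mul) L \<and> maximal_among (left_ideal scale mul) L)
    \<and> (\<forall>L. right_ideal scale mul L \<and> L \<noteq> {0} \<and> L \<noteq> UNIV \<longrightarrow>
           minimal_among (right_ideal scale mul) L \<and> maximal_among (right_ideal scale mul) L)
    \<and> (\<forall>I. two_sided_ideal scale mul I \<and> I \<noteq> UNIV \<longrightarrow> square_zero mul I)
    \<and> ((2::'k) \<noteq> 0 \<longrightarrow> simple_algebra scale mul)"
proof -
  interpret L: inv_derivation mul one d by (rule inv_derivation_of_algebra[OF A D])
  interpret R: inv_derivation "\<lambda>x y. mul y x" one d
    by (rule inv_derivation_opposite) unfold_locales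
  interpret V: vector_space scale using A unfolding unital_alternative_algebra_def by blast
  note left = left_ideal_ring_left_ideal and right = right_ideal_ring_left_ideal
  have a: "d ` L \<noteq> {0}" if "(left_ideal scale mul L \<or> right_ideal scale mul L) \<and> L \<noteq> {0}" for L
    using that L.left_ideal_d_nonzero[OF left] R.left_ideal_d_nonzero[OF right] by blast
  have b_left: "minimal_among (left_ideal scale mul) L \<and> maximal_among (left_ideal scale mul) L"
    if "left_ideal scale mul L \<and> L \<noteq> {0} \<and> L \<noteq> UNIV" for L
    by (rule minimal_maximal_if_nested_eq[OF L.left_ideal_nested_eq[OF left left]])
      (use that in blast)+
  have b_right: "minimal_among (right_ideal scale mul) L \<and> maximal_among (right_ideal scale mul) L"
    if "right_ideal scale mul L \<and> L \<noteq> {0} \<and> L \<noteq> UNIV" for L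
    by (rule minimal_maximal_if_nested_eq[OF R.left_ideal_nested_eq[OF right right]])
      (use that in blast)+
  have c: "square_zero mul I" if "two_sided_ideal scale mul I \<and> I \<noteq> UNIV" for I
    using that L.two_sided_ideal_square_zero[OF left right]
    unfolding two_sided_ideal_def square_zero_def by blast
  have "simple_algebra scale mul" if two: "(2::'k) \<noteq> 0"
  proof -
    have "x = 0" if "x + x = 0" for x :: 'a
      using that two V.scale_left_distrib[of 1 1 x] by (simp add: one_add_one)
    then show ?thesis
      using L.two_sided_ideal_trivial[OF _ left right] L.one_nonzero L.unit_l
      unfolding simple_algebra_def two_sided_ideal_def by metis
  qed
  then show ?thesis using a b_left b_right c by blast
qed

end
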